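(* For every $n\ge 2$ the Jones–Wenzl projectors in $\mathcal{TL}_0(\Bbbk)$ satisfy $$\mathrm{j}_n=(\mathrm{j}_{n-1}\otimes\mathrm{id}_{\mathbf 1})-(\mathrm{j}_{n-1}\otimes\mathrm{id}_{\mathbf 1})\circ(\mathrm{id}_{\mathbf{n-2}}\otimes\mathrm{cup})\circ(\mathrm{id}_{\mathbf{n-2}}\otimes\mathrm{cap})\circ(\mathrm{j}_{n-1}\otimes\mathrm{id}_{\mathbf 1}).$$
   Context: $\Bbbk$ is a field. $\mathcal{TL}_0(\Bbbk)$ is the strict $\Bbbk$-linear monoidal category with objects $\mathbf 0,\mathbf 1,\dots$, $\mathbf m\otimes\mathbf n=\mathbf{m+n}$, generated by $\mathrm{cup}:\mathbf 0\to\mathbf 2$ and $\mathrm{cap}:\mathbf 2\to\mathbf 0$ subject to $(\mathrm{id}_{\mathbf 1}\otimes\mathrm{cap})\circ(\mathrm{cup}\otimes\mathrm{id}_{\mathbf 1})=0=(\mathrm{cap}\otimes\mathrm{id}_{\mathbf 1})\circ(\mathrm{id}_{\mathbf 1}\otimes\mathrm{cup})$ and $\mathrm{cap}\circ\mathrm{cup}=\mathrm{id}_{\mathbf 0}$. A subset $I\subseteq\{1,\dots,n\}$ is apt if $n\notin I$ and no two elements of $I$ are consecutive; $\mathrm{cap}_{I,n}:\mathbf n\to\mathbf{n-2|I|}$ has caps joining strands $i,i+1$ for $i\in I$ and through-strands elsewhere, $\mathrm{cup}_{I,n}$ is its vertical reflection, and $\mathrm{j}_n=\sum_{I\text{ apt}}(-1)^{|I|}\mathrm{cup}_{I,n}\circ\mathrm{cap}_{I,n}\in\mathrm{End}(\mathbf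 n)$. *)

theory Defs
  imports Main
begin

text \<open>
  A strict k-linear monoidal category whose objects are the natural numbers
  (object m tensor object n = m + n), equipped with morphisms cup : 0 -> 2 and
  cap : 2 -> 0 satisfying the defining relations of TL_0(k).
  Morphisms of all hom-spaces live in one type 'm, with source src and target tgt.
  comp g f is the composite g after f (defined when src g = tgt f);
  tens is the (strict) tensor product; idm n is the identity of object n;
  add, smul, zer give each hom-space Hom(m,n) its k-vector-space structure.
  TL_0(k) is the free such structure, so an identity between morphisms built
  from cup and cap holds in TL_0(k) iff it holds in every such structure.
\<close>

locale tl0_category =
  fixes src :: "'m \<Rightarrow> nat" and tgt :: "'m \<Rightarrow> nat"
    and comp :: "'m \<Rightarrow> 'm \<Rightarrow> 'm"
    and tens :: "'m \<Rightarrow> 'm \<Rightarrow> 'm"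
    and idm :: "nat \<Rightarrow> 'm"
    and add :: "'m \<Rightarrow> 'm \<Rightarrow> 'm"
    and smul :: "'k::field \<Rightarrow> 'm \<Rightarrow> 'm"
    and zer :: "nat \<Rightarrow> nat \<Rightarrow> 'm"
    and cup :: 'm and cap :: 'm
  assumes id_src: "src (idm n) = n" and id_tgt: "tgt (idm n) = n"
    and comp_src: "src g = tgt f \<Longrightarrow> src (comp g f) = src f"
    and comp_tgt: "src g = tgt f \<Longrightarrow> tgt (comp g f) = tgt g"
    and comp_assoc: "src h = tgt g \<Longrightarrow> src g = tgt f \<Longrightarrow> comp h (comp g f) = comp (comp h g) f"
    and comp_id_left: "comp (idm (tgt f)) f = f"
    and comp_id_right: "comp f (idm (src f)) = f"
    and tens_src: "src (tens f g) = src f + src g"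
    and tens_tgt: "tgt (tens f g) = tgt f + tgt g"
    and tens_assoc: "tens f (tens g h) = tens (tens f g) h"
    and tens_unit_left: "tens (idm 0) f = f"
    and tens_unit_right: "tens f (idm 0) = f"
    and tens_id: "tens (idm m) (idm n) = idm (m + n)"
    and interchange: "src g1 = tgt f1 \<Longrightarrow> src g2 = tgt f2 \<Longrightarrow>
         comp (tens g1 g2) (tens f1 f2) = tens (comp g1 f1) (comp g2 f2)"
    and add_src: "src f = src g \<Longrightarrow> tgt f = tgt g \<Longrightarrow> src (add f g) = src f"
    and add_tgt: "src f = src g \<Longrightarrow> tgt f = tgt g \<Longrightarrow> tgt (add f g) = tgt f"
    and smul_src: "src (smul c f) = src f"
    and smul_tgt: "tgt (smul c f) = tgt f"
    and zer_src: "src (zer m n) = m"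
    and zer_tgt: "tgt (zer m n) = n"
    and add_assoc: "src f = src g \<Longrightarrow> tgt f = tgt g \<Longrightarrow> src g = src h \<Longrightarrow> tgt g = tgt h \<Longrightarrow>
         add f (add g h) = add (add f g) h"
    and add_comm: "src f = src g \<Longrightarrow> tgt f = tgt g \<Longrightarrow> add f g = add g f"
    and add_zero: "add f (zer (src f) (tgt f)) = f"
    and add_neg: "add f (smul (-1) f) = zer (src f) (tgt f)"
    and smul_one: "smul 1 f = f"
    and smul_smul: "smul a (smul b f) = smul (a * b) f"
    and smul_add_scalar: "smul (a + b) f = add (smul a f) (smul b f)"
    and smul_add: "src f = src g \<Longrightarrow> tgt f = tgt g \<Longrightarrow> smul a (add f g) = add (smul a f) (smul a g)"
    and comp_add_left: "src g = tgt f \<Longrightarrow> src g' = tgt f \<Longrightarrow> tgt g = tgt g' \<Longrightarrow>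
         comp (add g g') f = add (comp g f) (comp g' f)"
    and comp_add_right: "src g = tgt f \<Longrightarrow> src g = tgt f' \<Longrightarrow> src f = src f' \<Longrightarrow>
         comp g (add f f') = add (comp g f) (comp g f')"
    and comp_smul_left: "src g = tgt f \<Longrightarrow> comp (smul c g) f = smul c (comp g f)"
    and comp_smul_right: "src g = tgt f \<Longrightarrow> comp g (smul c f) = smul c (comp g f)"
    and tens_add_left: "src g = src g' \<Longrightarrow> tgt g = tgt g' \<Longrightarrow>
         tens (add g g') f = add (tens g f) (tens g' f)"
    and tens_add_right: "src f = src f' \<Longrightarrow> tgt f = tgt f' \<Longrightarrow>
         tens g (add f f') = add (tens g f) (tens g f')"
    and tens_smul_left: "tens (smul c g) f = smul c (tens g f)"
    and tens_smul_right: "tens g (smul c f) = smul c (tens g f)"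
    and cup_src: "src cup = 0" and cup_tgt: "tgt cup = 2"
    and cap_src: "src cap = 2" and cap_tgt: "tgt cap = 0"
    and zigzag1: "comp (tens (idm 1) cap) (tens cup (idm 1)) = zer 1 1"
    and zigzag2: "comp (tens cap (idm 1)) (tens (idm 1) cup) = zer 1 1"
    and circle: "comp cap cup = idm 0"

definition apt :: "nat \<Rightarrow> nat set \<Rightarrow> bool" where
  "apt n I \<longleftrightarrow> I \<subseteq> {1..n} \<and> n \<notin> I \<and> (\<forall>i\<in>I. Suc i \<notin> I)"

context tl0_category
begin

text \<open>capw I k r: the diagram on the r strands at positions k, k+1, ..., k+r-1,
  with a cap on strands i, i+1 for i in I and through-strands elsewhere.\<close>
fun capw :: "nat set \<Rightarrow> nat \<Rightarrow> nat \<Rightarrow> 'm" where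
  "capw I k 0 = idm 0"
| "capw I k (Suc 0) = idm 1"
| "capw I k (Suc (Suc r)) =
     (if k \<in> I then tens cap (capw I (k + 2) r) else tens (idm 1) (capw I (Suc k) (Suc r)))"

fun cupw :: "nat set \<Rightarrow> nat \<Rightarrow> nat \<Rightarrow> 'm" where
  "cupw I k 0 = idm 0"
| "cupw I k (Suc 0) = idm 1"
| "cupw I k (Suc (Suc r)) =
     (if k \<in> I then tens cup (cupw I (k + 2) r) else tens (idm 1) (cupw I (Suc k) (Suc r)))"

definition cap_I :: "nat set \<Rightarrow> nat \<Rightarrow> 'm" where "cap_I I n = capw I 1 n"
definition cup_I :: "nat set \<Rightarrow> nat \<Rightarrow> 'm" where "cup_I I n = cupw I 1 n"

definition hsum :: "nat \<Rightarrow> nat \<Rightarrow> 'm list \<Rightarrow> 'm" where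
  "hsum m n fs = foldr add fs (zer m n)"

definition msub :: "'m \<Rightarrow> 'm \<Rightarrow> 'm" where "msub f g = add f (smul (-1) g)"

definition apt_sets :: "nat \<Rightarrow> nat set list" where
  "apt_sets n = filter (apt n) (map set (subseqs [1..<Suc n]))"

definition jw :: "nat \<Rightarrow> 'm" where
  "jw n = hsum n n (map (\<lambda>I. smul ((-1) ^ card I) (comp (cup_I I n) (cap_I I n))) (apt_sets n))"

end

end

theory Submission
  imports Defs "HOL-Library.Multiset"
begin

(* Sorting the apt sets I by whether strand 1 carries a cap gives the recursion
   j(r+2) = (1 (x) j(r+1)) - (U (x) j(r)) with U = cup o cap, and an induction turns it into
   the mirror recursion j(r+2) = (j(r+1) (x) 1) - (j(r) (x) U).  In TL_0 the zigzag relations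
   give (U (x) 1) o (1 (x) U) = 0 = (1 (x) U) o (U (x) 1), so composing j(r+1) (x) 1 with
   1_r (x) U on either side leaves j(r) (x) U; with this the j(r) are idempotent.  Hence the
   correction term of the theorem collapses to j(n-2) (x) U, and the theorem is the mirror
   recursion. *)

fun nonconsec_sets :: "nat \<Rightarrow> nat \<Rightarrow> nat set list" where
  "nonconsec_sets k 0 = [{}]"
| "nonconsec_sets k (Suc 0) = [{}]"
| "nonconsec_sets k (Suc (Suc r)) =
     nonconsec_sets (Suc k) (Suc r) @ map (insert k) (nonconsec_sets (k + 2) r)"

lemma set_nonconsec_sets:
  "set (nonconsec_sets k r) = {I. \<forall>i\<in>I. k \<le> i \<and> Suc i < k + r \<and> Suc i \<notin> I}"
proof (induction k r rule: nonconsec_sets.induct)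
  case (3 k r)
  show ?case
  proof (intro set_eqI iffI)
    fix I assume "I \<in> {I. \<forall>i\<in>I. k \<le> i \<and> Suc i < k + Suc (Suc r) \<and> Suc i \<notin> I}"
    then have I: "\<forall>i\<in>I. k \<le> i \<and> Suc i < k + Suc (Suc r) \<and> Suc i \<notin> I" by simp
    show "I \<in> set (nonconsec_sets k (Suc (Suc r)))"
    proof (cases "k \<in> I")
      case True
      then have "Suc k \<notin> I" using I by blast
      then have "\<forall>i\<in>I - {k}. k + 2 \<le> i \<and> Suc i < k + 2 + r \<and> Suc i \<notin> I - {k}"
        using I by (auto simp: Suc_le_eq order_less_le)
      then show ?thesis using True 3 by (auto intro!: image_eqI[of _ _ "I - {k}"])
    next
      case False
      then show ?thesis using I 3 by (auto simp: Suc_le_eq order_less_le)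
    qed
  next
    fix I assume "I \<in> set (nonconsec_sets k (Suc (Suc r)))"
    then show "I \<in> {I. \<forall>i\<in>I. k \<le> i \<and> Suc i < k + Suc (Suc r) \<and> Suc i \<notin> I}"
      using 3 by fastforce
  qed
qed auto

lemma distinct_nonconsec_sets: "distinct (nonconsec_sets k r)"
proof (induction k r rule: nonconsec_sets.induct)
  case (3 k r)
  have "k \<notin> J" if "J \<in> set (nonconsec_sets (Suc k) (Suc r)) \<union> set (nonconsec_sets (k + 2) r)" for J
    using that by (auto simp: set_nonconsec_sets)
  then have "inj_on (insert k) (set (nonconsec_sets (k + 2) r))"
    and "set (nonconsec_sets (Suc k) (Suc r)) \<inter> insert k ` set (nonconsec_sets (k + 2) r) = {}"
    by (simp_all add: inj_on_def insert_ident) blast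
  then show ?case using 3 by (simp add: distinct_map)
qed auto

lemma finite_nonconsec_sets: "I \<in> set (nonconsec_sets k r) \<Longrightarrow> finite I"
  by (rule finite_subset[of I "{..<k + r}"]) (auto simp: set_nonconsec_sets)

lemma set_nonconsec_sets_apt: "set (nonconsec_sets 1 n) = {I. apt n I}"
proof -
  have "(1 \<le> i \<and> Suc i < 1 + n) \<longleftrightarrow> i \<in> {1..n} \<and> i \<noteq> n" for i
    by auto
  then show ?thesis
    unfolding set_nonconsec_sets apt_def by blast
qed

context tl0_category
begin

lemmas [simp] = id_src id_tgt comp_src comp_tgt tens_src tens_tgt add_src add_tgt
  smul_src smul_tgt zer_src zer_tgt cup_src cup_tgt cap_src cap_tgt

abbreviation in_hom :: "'m \<Rightarrow> nat \<Rightarrow> nat \<Rightarrow> bool" where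
  "in_hom f m n \<equiv> src f = m \<and> tgt f = n"

lemma comp_idm_left [simp]: "tgt f = n \<Longrightarrow> comp (idm n) f = f"
  using comp_id_left by blast

lemma comp_idm_right [simp]: "src f = n \<Longrightarrow> comp f (idm n) = f"
  using comp_id_right by blast

lemma smul_zero_left: "smul 0 f = zer (src f) (tgt f)"
  using smul_add_scalar[of 1 "-1" f] by (simp add: smul_one add_neg)

lemma smul_zer [simp]: "smul c (zer m n) = zer m n"
  using smul_smul[of c 0 "zer m n"] by (simp add: smul_zero_left)

lemma comp_zer_left: "tgt f = m \<Longrightarrow> comp (zer m n) f = zer (src f) n"
  using comp_smul_left[of "zer m n" f 0] by (simp add: smul_zero_left)

lemma comp_zer_right: "src g = n \<Longrightarrow> comp g (zer m n) = zer m (tgt g)"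
  using comp_smul_right[of g "zer m n" 0] by (simp add: smul_zero_left)

lemma tens_zer_right: "tens g (zer m n) = zer (src g + m) (tgt g + n)"
  using tens_smul_right[of g 0 "zer m n"] by (simp add: smul_zero_left)

lemma add_zer_right [simp]: "in_hom f m n \<Longrightarrow> add f (zer m n) = f"
  using add_zero[of f] by simp

lemma add_zer_left [simp]: "in_hom f m n \<Longrightarrow> add (zer m n) f = f"
  using add_comm[of "zer m n" f] by simp

lemma add_left_commute:
  "in_hom f m n \<Longrightarrow> in_hom g m n \<Longrightarrow> in_hom h m n \<Longrightarrow> add f (add g h) = add g (add f h)"
  by (metis add_assoc add_comm)

lemma msub_in_hom [simp]: "in_hom f m n \<Longrightarrow> in_hom g m n \<Longrightarrow> in_hom (msub f g) m n"
  by (simp add: msub_def)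

lemma msub_self: "msub f f = zer (src f) (tgt f)"
  by (simp add: msub_def add_neg)

lemma msub_zer: "in_hom f m n \<Longrightarrow> msub f (zer m n) = f"
  using add_zero[of f] by (simp add: msub_def)

lemma comp_msub_left:
  "in_hom g m n \<Longrightarrow> in_hom g' m n \<Longrightarrow> tgt f = m \<Longrightarrow>
    comp (msub g g') f = msub (comp g f) (comp g' f)"
  by (simp add: msub_def comp_add_left comp_smul_left)

lemma comp_msub_right:
  "in_hom f m n \<Longrightarrow> in_hom f' m n \<Longrightarrow> src g = n \<Longrightarrow>
    comp g (msub f f') = msub (comp g f) (comp g f')"
  by (simp add: msub_def comp_add_right comp_smul_right)

lemma tens_msub_left:
  "in_hom g m n \<Longrightarrow> in_hom g' m n \<Longrightarrow> tens (msub g g') f = msub (tens g f) (tens g' f)"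
  by (simp add: msub_def tens_add_left tens_smul_left)

lemma tens_msub_right:
  "in_hom g m n \<Longrightarrow> in_hom g' m n \<Longrightarrow> tens f (msub g g') = msub (tens f g) (tens f g')"
  by (simp add: msub_def tens_add_right tens_smul_right)

lemma msub_msub_swap:
  assumes "in_hom a m n" "in_hom b m n" "in_hom c m n" "in_hom d m n"
  shows "msub (msub a b) (msub c d) = msub (msub a c) (msub b d)"
proof -
  have neg: "smul (-1) (add x (smul (-1) y)) = add (smul (-1) x) y" if "in_hom x m n" "in_hom y m n" for x y
    using that by (simp add: smul_add smul_smul smul_one)
  have "msub (msub a b) (msub c d) = add a (add (smul (-1) b) (add (smul (-1) c) d))"
    using assms by (simp add: msub_def neg add_assoc[symmetric])
  also have "\<dots> = add a (add (smul (-1) c) (add (smul (-1) b) d))"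
    using assms by (simp add: add_left_commute)
  also have "\<dots> = msub (msub a c) (msub b d)"
    using assms by (simp add: msub_def neg add_assoc[symmetric])
  finally show ?thesis .
qed

lemma msub_msub_commute:
  assumes "in_hom a m n" "in_hom b m n" "in_hom c m n"
  shows "msub (msub a b) c = msub (msub a c) b"
  using msub_msub_swap[of a m n b c "zer m n"] assms by (simp add: msub_zer)

lemma hsum_Nil [simp]: "hsum m n [] = zer m n"
  by (simp add: hsum_def)

lemma hsum_Cons [simp]: "hsum m n (f # fs) = add f (hsum m n fs)"
  by (simp add: hsum_def)

lemma hsum_in_hom [simp]: "\<forall>f\<in>set fs. in_hom f m n \<Longrightarrow> in_hom (hsum m n fs) m n"
  by (induction fs) auto

lemma hsum_append:
  "\<forall>f\<in>set (fs @ gs). in_hom f m n \<Longrightarrow> hsum m n (fs @ gs) = add (hsum m n fs) (hsum m n gs)"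
  by (induction fs) (auto simp: add_assoc)

lemma hsum_perm:
  assumes "mset fs = mset gs" and "\<forall>f\<in>set fs. in_hom f m n"
  shows "hsum m n fs = hsum m n gs"
proof -
  have "fold add (rev fs) (zer m n) = fold add (rev gs) (zer m n)"
    by (rule fold_permuted_eq[where P = "\<lambda>z. in_hom z m n"])
      (use assms in \<open>auto simp: add_left_commute\<close>)
  then show ?thesis
    by (simp add: hsum_def foldr_conv_fold)
qed

lemma additive_hsum:
  assumes "\<And>f g. in_hom f m n \<Longrightarrow> in_hom g m n \<Longrightarrow> \<phi> (add f g) = add (\<phi> f) (\<phi> g)"
    and "\<phi> (zer m n) = zer m' n'" and "\<forall>f\<in>set fs. in_hom f m n"
  shows "\<phi> (hsum m n fs) = hsum m' n' (map \<phi> fs)"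
  using assms(3) by (induction fs) (auto simp: assms(1,2))

lemma tens_hsum:
  "\<forall>f\<in>set fs. in_hom f m n \<Longrightarrow>
    tens g (hsum m n fs) = hsum (src g + m) (tgt g + n) (map (tens g) fs)"
  by (rule additive_hsum) (simp_all add: tens_add_right tens_zer_right)

lemma smul_hsum: "\<forall>f\<in>set fs. in_hom f m n \<Longrightarrow> smul c (hsum m n fs) = hsum m n (map (smul c) fs)"
  by (rule additive_hsum) (simp_all add: smul_add)

abbreviation cup_cap :: 'm where
  "cup_cap \<equiv> comp cup cap"

lemma cup_cap_idem: "comp cup_cap cup_cap = cup_cap"
proof -
  have "comp cup_cap cup_cap = comp cup (comp (comp cap cup) cap)"
    by (simp add: comp_assoc)
  then show ?thesis
    by (simp add: circle)
qed

lemma tens_cup_cap_idm_comp_zero: "comp (tens cup_cap (idm 1)) (tens (idm 1) cup_cap) = zer 3 3"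
proof -
  have "comp (tens cup_cap (idm 1)) (tens (idm 1) cup_cap)
      = comp (comp (tens cup (idm 1)) (tens cap (idm 1))) (comp (tens (idm 1) cup) (tens (idm 1) cap))"
    by (simp add: interchange)
  also have "\<dots> = comp (tens cup (idm 1)) (comp (comp (tens cap (idm 1)) (tens (idm 1) cup)) (tens (idm 1) cap))"
    by (simp add: comp_assoc)
  also have "\<dots> = zer 3 3"
    unfolding zigzag2 by (simp add: comp_zer_left comp_zer_right numeral_3_eq_3)
  finally show ?thesis .
qed

lemma tens_idm_cup_cap_comp_zero: "comp (tens (idm 1) cup_cap) (tens cup_cap (idm 1)) = zer 3 3"
proof -
  have "comp (tens (idm 1) cup_cap) (tens cup_cap (idm 1))
      = comp (comp (tens (idm 1) cup) (tens (idm 1) cap)) (comp (tens cup (idm 1)) (tens cap (idm 1)))"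
    by (simp add: interchange)
  also have "\<dots> = comp (tens (idm 1) cup) (comp (comp (tens (idm 1) cap) (tens cup (idm 1))) (tens cap (idm 1)))"
    by (simp add: comp_assoc)
  also have "\<dots> = zer 3 3"
    unfolding zigzag1 by (simp add: comp_zer_left comp_zer_right numeral_3_eq_3)
  finally show ?thesis .
qed

lemma src_capw [simp]: "src (capw I k r) = r"
  by (induction I k r rule: capw.induct) auto

lemma tgt_cupw [simp]: "tgt (cupw I k r) = r"
  by (induction I k r rule: cupw.induct) auto

lemma src_cupw [simp]: "src (cupw I k r) = tgt (capw I k r)"
  by (induction I k r rule: capw.induct) auto

lemma capw_insert_below: "i < k \<Longrightarrow> capw (insert i I) k r = capw I k r"
  by (induction I k r rule: capw.induct) auto

lemma cupw_insert_below: "i < k \<Longrightarrow> cupw (insert i I) k r = cupw I k r"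
  by (induction I k r rule: cupw.induct) auto

definition jw_term :: "nat set \<Rightarrow> nat \<Rightarrow> nat \<Rightarrow> 'm" where
  "jw_term I k r = smul ((-1) ^ card I) (comp (cupw I k r) (capw I k r))"

lemma jw_term_in_hom [simp]: "in_hom (jw_term I k r) r r"
  by (simp add: jw_term_def)

lemma jw_term_Suc_Suc_notin:
  "k \<notin> I \<Longrightarrow> jw_term I k (Suc (Suc r)) = tens (idm 1) (jw_term I (Suc k) (Suc r))"
  by (simp add: jw_term_def interchange tens_smul_right)

lemma jw_term_Suc_Suc_insert:
  "finite J \<Longrightarrow> k \<notin> J \<Longrightarrow>
    jw_term (insert k J) k (Suc (Suc r)) = smul (-1) (tens cup_cap (jw_term J (k + 2) r))"
  by (simp add: jw_term_def interchange tens_smul_right smul_smul capw_insert_below cupw_insert_below)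

(* j_r drawn on the strands k, ..., k+r-1; caps are indexed by absolute strand position, as in capw. *)
definition jw_sum :: "nat \<Rightarrow> nat \<Rightarrow> 'm" where
  "jw_sum k r = hsum r r (map (\<lambda>I. jw_term I k r) (nonconsec_sets k r))"

lemma jw_sum_in_hom [simp]: "in_hom (jw_sum k r) r r"
  by (simp add: jw_sum_def)

lemma jw_sum_0: "jw_sum k 0 = idm 0"
  by (simp add: jw_sum_def jw_term_def smul_one)

lemma jw_sum_1: "jw_sum k (Suc 0) = idm 1"
  by (simp add: jw_sum_def jw_term_def smul_one)

lemma jw_sum_Suc_Suc:
  "jw_sum k (Suc (Suc r)) = msub (tens (idm 1) (jw_sum (Suc k) (Suc r))) (tens cup_cap (jw_sum (k + 2) r))"
proof -
  let ?A = "nonconsec_sets (Suc k) (Suc r)" and ?B = "nonconsec_sets (k + 2) r"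
  have "k \<notin> I" if "I \<in> set ?A" for I
    using that by (auto simp: set_nonconsec_sets)
  then have A: "map (\<lambda>I. jw_term I k (Suc (Suc r))) ?A
      = map (tens (idm 1)) (map (\<lambda>I. jw_term I (Suc k) (Suc r)) ?A)"
    by (simp add: jw_term_Suc_Suc_notin)
  have "finite J" "k \<notin> J" if "J \<in> set ?B" for J
    using that by (rule finite_nonconsec_sets) (use that in \<open>auto simp: set_nonconsec_sets\<close>)
  then have B: "map (\<lambda>I. jw_term I k (Suc (Suc r))) (map (insert k) ?B)
      = map (smul (-1)) (map (tens cup_cap) (map (\<lambda>J. jw_term J (k + 2) r) ?B))"
    by (simp add: jw_term_Suc_Suc_insert)
  have "jw_sum k (Suc (Suc r))
      = add (hsum (Suc (Suc r)) (Suc (Suc r))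
              (map (tens (idm 1)) (map (\<lambda>I. jw_term I (Suc k) (Suc r)) ?A)))
          (hsum (Suc (Suc r)) (Suc (Suc r))
              (map (smul (-1)) (map (tens cup_cap) (map (\<lambda>J. jw_term J (k + 2) r) ?B))))"
    unfolding jw_sum_def nonconsec_sets.simps map_append A B
    by (rule hsum_append) (auto simp del: map_map)
  also have "\<dots> = add (tens (idm 1) (jw_sum (Suc k) (Suc r))) (smul (-1) (tens cup_cap (jw_sum (k + 2) r)))"
    unfolding jw_sum_def by (simp add: tens_hsum smul_hsum del: map_map)
  finally show ?thesis
    by (simp add: msub_def)
qed

lemma jw_sum_shift: "jw_sum k r = jw_sum 1 r"
proof (induction r arbitrary: k rule: induct_nat_012)
  case (ge2 r)
  show ?case
    unfolding jw_sum_Suc_Suc ge2(2)[of "Suc k"] ge2(2)[of "Suc 1"] ge2(1)[of "k + 2"] ge2(1)[of "1 + 2"] ..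
qed (simp_all add: jw_sum_0 jw_sum_1)

lemma jw_eq_jw_sum: "jw n = jw_sum 1 n"
proof -
  have "distinct (apt_sets n)"
    unfolding apt_sets_def by (intro distinct_filter distinct_set_subseqs) simp
  moreover have "set (apt_sets n) = set (nonconsec_sets 1 n)"
    unfolding apt_sets_def set_nonconsec_sets_apt set_filter set_map subseqs_powset set_upt
      atLeastLessThanSuc_atLeastAtMost apt_def
    by blast
  ultimately have "mset (apt_sets n) = mset (nonconsec_sets 1 n)"
    by (simp add: distinct_nonconsec_sets set_eq_iff_mset_eq_distinct)
  then show ?thesis
    unfolding jw_def jw_sum_def cup_I_def cap_I_def jw_term_def[symmetric]
    by (intro hsum_perm) simp_all
qed

lemma jw_0 [simp]: "jw 0 = idm 0"
  by (simp add: jw_eq_jw_sum jw_sum_0)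

lemma jw_1 [simp]: "jw (Suc 0) = idm 1"
  by (simp add: jw_eq_jw_sum jw_sum_1)

lemma src_jw [simp]: "src (jw n) = n" and tgt_jw [simp]: "tgt (jw n) = n"
  by (simp_all add: jw_eq_jw_sum)

lemma jw_Suc_Suc: "jw (Suc (Suc r)) = msub (tens (idm 1) (jw (Suc r))) (tens cup_cap (jw r))"
  unfolding jw_eq_jw_sum jw_sum_Suc_Suc jw_sum_shift[of "Suc 1"] jw_sum_shift[of "1 + 2"] ..

lemma jw_Suc_Suc_right: "jw (Suc (Suc r)) = msub (tens (jw (Suc r)) (idm 1)) (tens (jw r) cup_cap)"
proof (induction r rule: induct_nat_012)
  case 0
  show ?case
    by (simp add: jw_Suc_Suc tens_unit_left tens_unit_right)
next
  case 1
  show ?case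
    by (simp add: jw_Suc_Suc tens_msub_left tens_msub_right tens_id tens_unit_right)
      (rule msub_msub_commute; simp)
next
  case (ge2 r)
  let ?a = "jw (Suc (Suc r))" and ?b = "jw (Suc r)" and ?c = "jw r"
  have left: "tens (idm 1) (jw (Suc (Suc (Suc r))))
      = msub (tens (tens (idm 1) ?a) (idm 1)) (tens (tens (idm 1) ?b) cup_cap)"
    unfolding ge2(2) by (simp add: tens_msub_right tens_assoc)
  have right: "tens cup_cap ?a = msub (tens (tens cup_cap ?b) (idm 1)) (tens (tens cup_cap ?c) cup_cap)"
    unfolding ge2(1) by (simp add: tens_msub_right tens_assoc)
  have "jw (Suc (Suc (Suc (Suc r)))) = msub (tens (idm 1) (jw (Suc (Suc (Suc r))))) (tens cup_cap ?a)"
    by (rule jw_Suc_Suc)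
  also have "\<dots> = msub (msub (tens (tens (idm 1) ?a) (idm 1)) (tens (tens (idm 1) ?b) cup_cap))
      (msub (tens (tens cup_cap ?b) (idm 1)) (tens (tens cup_cap ?c) cup_cap))"
    unfolding left right ..
  also have "\<dots> = msub (msub (tens (tens (idm 1) ?a) (idm 1)) (tens (tens cup_cap ?b) (idm 1)))
      (msub (tens (tens (idm 1) ?b) cup_cap) (tens (tens cup_cap ?c) cup_cap))"
    by (rule msub_msub_swap) simp_all
  also have "\<dots> = msub (tens (jw (Suc (Suc (Suc r)))) (idm 1)) (tens ?a cup_cap)"
    by (simp add: jw_Suc_Suc[of "Suc r"] jw_Suc_Suc[of r] tens_msub_left)
  finally show ?case .
qed

lemma comp_tens_idm_idm_tens:
  "src f = m \<Longrightarrow> tgt g = n \<Longrightarrow> comp (tens f (idm n)) (tens (idm m) g) = tens f g"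
  by (simp add: interchange)

lemma comp_idm_tens_tens_idm:
  "tgt f = m \<Longrightarrow> src g = n \<Longrightarrow> comp (tens (idm m) g) (tens f (idm n)) = tens f g"
  by (simp add: interchange)

lemma tens_idm_Suc: "tens (idm (Suc s)) f = tens (idm s) (tens (idm 1) f)"
  by (simp add: tens_assoc tens_id)

lemma jw_Suc_Suc_tens_idm:
  "tens (jw (Suc (Suc s))) (idm 1) = msub (tens (jw (Suc s)) (idm 2)) (tens (jw s) (tens cup_cap (idm 1)))"
  by (simp add: jw_Suc_Suc_right tens_msub_left tens_assoc[symmetric] tens_id numeral_2_eq_2)

lemma jw_Suc_tens_comp_cup_cap:
  "comp (tens (jw (Suc r)) (idm 1)) (tens (idm r) cup_cap) = tens (jw r) cup_cap"
proof (cases r)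
  case 0
  then show ?thesis
    by (simp add: tens_id tens_unit_left)
next
  case (Suc s)
  have "comp (tens (jw (Suc (Suc s))) (idm 1)) (tens (idm (Suc s)) cup_cap)
      = msub (comp (tens (jw (Suc s)) (idm 2)) (tens (idm (Suc s)) cup_cap))
          (comp (tens (jw s) (tens cup_cap (idm 1))) (tens (idm s) (tens (idm 1) cup_cap)))"
    unfolding jw_Suc_Suc_tens_idm by (simp add: comp_msub_left tens_idm_Suc[of s])
  also have "\<dots> = msub (tens (jw (Suc s)) cup_cap)
      (tens (jw s) (comp (tens cup_cap (idm 1)) (tens (idm 1) cup_cap)))"
    by (simp add: comp_tens_idm_idm_tens interchange)
  also have "\<dots> = msub (tens (jw (Suc s)) cup_cap) (tens (jw s) (zer 3 3))"
    unfolding tens_cup_cap_idm_comp_zero ..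
  finally show ?thesis
    using Suc by (simp add: tens_zer_right msub_zer)
qed

lemma cup_cap_comp_jw_Suc_tens:
  "comp (tens (idm r) cup_cap) (tens (jw (Suc r)) (idm 1)) = tens (jw r) cup_cap"
proof (cases r)
  case 0
  then show ?thesis
    by (simp add: tens_id tens_unit_left)
next
  case (Suc s)
  have "comp (tens (idm (Suc s)) cup_cap) (tens (jw (Suc (Suc s))) (idm 1))
      = msub (comp (tens (idm (Suc s)) cup_cap) (tens (jw (Suc s)) (idm 2)))
          (comp (tens (idm s) (tens (idm 1) cup_cap)) (tens (jw s) (tens cup_cap (idm 1))))"
    unfolding jw_Suc_Suc_tens_idm by (simp add: comp_msub_right tens_idm_Suc[of s])
  also have "\<dots> = msub (tens (jw (Suc s)) cup_cap)
      (tens (jw s) (comp (tens (idm 1) cup_cap) (tens cup_cap (idm 1))))"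
    by (simp add: comp_idm_tens_tens_idm interchange)
  also have "\<dots> = msub (tens (jw (Suc s)) cup_cap) (tens (jw s) (zer 3 3))"
    unfolding tens_idm_cup_cap_comp_zero ..
  finally show ?thesis
    using Suc by (simp add: tens_zer_right msub_zer)
qed

lemma comp_jw_Suc_tens_jw_tens_cup_cap:
  "comp (tens (jw (Suc r)) (idm 1)) (tens (jw r) cup_cap) = tens (comp (jw r) (jw r)) cup_cap"
proof -
  have "comp (tens (jw (Suc r)) (idm 1)) (tens (jw r) cup_cap)
      = comp (comp (tens (jw (Suc r)) (idm 1)) (tens (idm r) cup_cap)) (tens (jw r) (idm 2))"
    by (simp add: comp_idm_tens_tens_idm[of "jw r" r cup_cap 2, symmetric] comp_assoc)
  also have "\<dots> = comp (tens (jw r) cup_cap) (tens (jw r) (idm 2))"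
    unfolding jw_Suc_tens_comp_cup_cap ..
  also have "\<dots> = tens (comp (jw r) (jw r)) cup_cap"
    by (simp add: interchange)
  finally show ?thesis .
qed

lemma comp_jw_tens_cup_cap_jw_Suc_tens:
  "comp (tens (jw r) cup_cap) (tens (jw (Suc r)) (idm 1)) = tens (comp (jw r) (jw r)) cup_cap"
proof -
  have "comp (tens (jw r) cup_cap) (tens (jw (Suc r)) (idm 1))
      = comp (tens (jw r) (idm 2)) (comp (tens (idm r) cup_cap) (tens (jw (Suc r)) (idm 1)))"
    by (simp add: comp_tens_idm_idm_tens[of "jw r" r cup_cap 2, symmetric] comp_assoc)
  also have "\<dots> = comp (tens (jw r) (idm 2)) (tens (jw r) cup_cap)"
    unfolding cup_cap_comp_jw_Suc_tens ..
  also have "\<dots> = tens (comp (jw r) (jw r)) cup_cap"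
    by (simp add: interchange)
  finally show ?thesis .
qed

lemma jw_idem: "comp (jw r) (jw r) = jw r"
proof (induction r rule: induct_nat_012)
  case (ge2 r)
  let ?A = "tens (jw (Suc r)) (idm 1)" and ?B = "tens (jw r) cup_cap"
  have "comp ?A ?A = ?A"
    using ge2 by (simp add: interchange)
  moreover have "comp ?B ?B = ?B"
    using ge2 by (simp add: interchange cup_cap_idem)
  moreover have "comp ?A ?B = ?B" and "comp ?B ?A = ?B"
    unfolding comp_jw_Suc_tens_jw_tens_cup_cap comp_jw_tens_cup_cap_jw_Suc_tens ge2 by simp_all
  ultimately show ?case
    by (simp add: jw_Suc_Suc_right comp_msub_left comp_msub_right msub_self msub_zer)
qed simp_all

end

theorem mainTheorem7:
  fixes src tgt :: "'m \<Rightarrow> nat" and comp tens add :: "'m \<Rightarrow> 'm \<Rightarrow> 'm"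
    and idm :: "nat \<Rightarrow> 'm" and smul :: "'k::field \<Rightarrow> 'm \<Rightarrow> 'm"
    and zer :: "nat \<Rightarrow> nat \<Rightarrow> 'm" and cup cap :: 'm and n :: nat
  assumes TL: "tl0_category src tgt comp tens idm add smul zer cup cap"
    and n: "2 \<le> n"
  shows "tl0_category.jw comp tens idm add smul zer cup cap n =
    tl0_category.msub add smul
      (tens (tl0_category.jw comp tens idm add smul zer cup cap (n - 1)) (idm 1))
      (comp (tens (tl0_category.jw comp tens idm add smul zer cup cap (n - 1)) (idm 1))
        (comp (tens (idm (n - 2)) cup)
          (comp (tens (idm (n - 2)) cap)
            (tens (tl0_category.jw comp tens idm add smul zer cup cap (n - 1)) (idm 1)))))"
proof -
  interpret tl0_category src tgt comp tens idm add smul zer cup cap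
    by (rule TL)
  obtain r where n_eq: "n = Suc (Suc r)"
    using n by (metis add_2_eq_Suc le_Suc_ex)
  let ?A = "tens (jw (Suc r)) (idm 1)"
  have "comp (tens (idm r) cup) (comp (tens (idm r) cap) ?A) = comp (tens (idm r) cup_cap) ?A"
    by (simp add: comp_assoc interchange)
  also have "\<dots> = tens (jw r) cup_cap"
    by (rule cup_cap_comp_jw_Suc_tens)
  finally have "comp ?A (comp (tens (idm r) cup) (comp (tens (idm r) cap) ?A)) = tens (jw r) cup_cap"
    by (simp only: comp_jw_Suc_tens_jw_tens_cup_cap jw_idem)
  then show ?thesis
    using jw_Suc_Suc_right[of r] by (simp add: n_eq)
qed

end
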